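(* Let $G_1$ be a group, $n,m\ge0$, $G\le G_1^n$ a subgroup, $w(\bar x,\bar y)$ a group word in the variables $\bar x=(x_1,\dots,x_n)$, $\bar y=(y_1,\dots,y_m)$ and their inverses, and $\bar g\in G_1^m$, $c\in G_1$. If the set $\{\bar h\in G:w(\bar h,\bar g)=c\}$ is $2$-large in $G$, then $w(\bar h,\bar 1)=1$ for all $\bar h\in G\cap Z(G_1)^n$, where $\bar 1=(1,\dots,1)\in G_1^m$.
   Context: A subset $X\subseteq G$ is $2$-large in $G$ if $\bar aX\cap\bar bX\ne\emptyset$ for all $\bar a,\bar b\in G$. *)

theory Defs
  imports "HOL-Algebra.Product_Groups"
begin

text \<open>A group word: a list of letters. A letter is a variable (Inl i = x_i, Inr j = y_j)
  together with a flag saying whether it is inverted (True = inverse).\<close>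
type_synonym word = "((nat + nat) \<times> bool) list"

definition word_vars_ok :: "nat \<Rightarrow> nat \<Rightarrow> word \<Rightarrow> bool" where
  "word_vars_ok n m w \<longleftrightarrow>
     (\<forall>l\<in>set w. case fst l of Inl i \<Rightarrow> i < n | Inr j \<Rightarrow> j < m)"

definition eval_letter :: "('g, 'z) monoid_scheme \<Rightarrow> (nat \<Rightarrow> 'g) \<Rightarrow> (nat \<Rightarrow> 'g)
    \<Rightarrow> (nat + nat) \<times> bool \<Rightarrow> 'g" where
  "eval_letter G1 xs ys l =
     (let v = (case fst l of Inl i \<Rightarrow> xs i | Inr j \<Rightarrow> ys j)
      in if snd l then inv\<^bsub>G1\<^esub> v else v)"

definition eval_word :: "('g, 'z) monoid_scheme \<Rightarrow> word \<Rightarrow> (nat \<Rightarrow> 'g) \<Rightarrow> (nat \<Rightarrow> 'g) \<Rightarrow> 'g" where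
  "eval_word G1 w xs ys = foldr (\<lambda>l acc. eval_letter G1 xs ys l \<otimes>\<^bsub>G1\<^esub> acc) w \<one>\<^bsub>G1\<^esub>"

definition group_center :: "('g, 'z) monoid_scheme \<Rightarrow> 'g set" where
  "group_center G1 = {z \<in> carrier G1. \<forall>x\<in>carrier G1. z \<otimes>\<^bsub>G1\<^esub> x = x \<otimes>\<^bsub>G1\<^esub> z}"

definition two_large :: "('g, 'z) monoid_scheme \<Rightarrow> 'g set \<Rightarrow> 'g set \<Rightarrow> bool" where
  "two_large P H X \<longleftrightarrow>
     (\<forall>a\<in>H. \<forall>b\<in>H. {a \<otimes>\<^bsub>P\<^esub> x | x. x \<in> X} \<inter> {b \<otimes>\<^bsub>P\<^esub> x | x. x \<in> X} \<noteq> {})"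

end

theory Submission
  imports Defs
begin

text \<open>
  Apply 2-largeness to the translates by \<open>h\<close> and by \<open>1\<close>: this gives solutions \<open>x\<close> and \<open>h x\<close>
  of \<open>w(-, g) = c\<close> in \<open>G\<close>. When \<open>h\<close> is central, every letter of \<open>w\<close> at \<open>(h x, g)\<close> splits into a
  central factor coming from \<open>h\<close> and a factor coming from \<open>(x, g)\<close>; the central factors can be
  collected in front, so \<open>w(h x, g) = w(h, 1) w(x, g)\<close>, i.e. \<open>c = w(h, 1) c\<close>.
\<close>

lemma (in group) group_centerD:
  "z \<in> group_center G \<Longrightarrow> x \<in> carrier G \<Longrightarrow> z \<otimes> x = x \<otimes> z"
  by (simp add: group_center_def)

lemma (in group) subgroup_group_center: "subgroup (group_center G) G"
proof (rule subgroupI)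
  show "group_center G \<subseteq> carrier G" "group_center G \<noteq> {}"
    by (auto simp: group_center_def)
next
  fix a assume a: "a \<in> group_center G"
  then have a_carr: "a \<in> carrier G" by (simp add: group_center_def)
  have "inv a \<otimes> x = x \<otimes> inv a" if "x \<in> carrier G" for x
  proof -
    have "inv a \<otimes> x = inv a \<otimes> (x \<otimes> a) \<otimes> inv a"
      using a_carr that by (simp add: m_assoc)
    also have "\<dots> = inv a \<otimes> (a \<otimes> x) \<otimes> inv a"
      by (simp add: group_centerD [OF a that])
    also have "\<dots> = x \<otimes> inv a"
      using a_carr that by (simp add: m_assoc [symmetric])
    finally show ?thesis .
  qed
  then show "inv a \<in> group_center G"
    using a_carr by (simp add: group_center_def)
next
  fix a b assume a: "a \<in> group_center G" and b: "b \<in> group_center G"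
  then have carr: "a \<in> carrier G" "b \<in> carrier G" by (auto simp: group_center_def)
  have "a \<otimes> b \<otimes> x = x \<otimes> (a \<otimes> b)" if "x \<in> carrier G" for x
  proof -
    have "a \<otimes> b \<otimes> x = a \<otimes> (x \<otimes> b)"
      using carr that by (simp add: m_assoc group_centerD [OF b that])
    also have "\<dots> = x \<otimes> a \<otimes> b"
      using carr that by (simp add: m_assoc [symmetric] group_centerD [OF a that])
    finally show ?thesis
      using carr that by (simp add: m_assoc)
  qed
  then show "a \<otimes> b \<in> group_center G"
    using carr by (simp add: group_center_def)
qed

lemma (in group) inv_mult_central:
  assumes "a \<in> group_center G" and "b \<in> carrier G"
  shows "inv (a \<otimes> b) = inv a \<otimes> inv b"
proof -
  have "inv a \<in> group_center G"
    using assms(1) by (rule subgroup.m_inv_closed [OF subgroup_group_center])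
  moreover have "a \<in> carrier G"
    using assms(1) by (simp add: group_center_def)
  ultimately show ?thesis
    using assms(2) by (simp add: inv_mult_group group_centerD [of "inv a" "inv b"])
qed

lemma eval_word_Nil [simp]: "eval_word G [] x y = \<one>\<^bsub>G\<^esub>"
  by (simp add: eval_word_def)

lemma eval_word_Cons [simp]:
  "eval_word G (l # w) x y = eval_letter G x y l \<otimes>\<^bsub>G\<^esub> eval_word G w x y"
  by (simp add: eval_word_def)

lemma word_vars_ok_Cons [simp]:
  "word_vars_ok n m (l # w) \<longleftrightarrow>
     (case fst l of Inl i \<Rightarrow> i < n | Inr j \<Rightarrow> j < m) \<and> word_vars_ok n m w"
  by (simp add: word_vars_ok_def)

lemma eval_word_cong:
  assumes "word_vars_ok n m w" and "\<forall>i<n. x i = x' i" and "\<forall>j<m. y j = y' j"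
  shows "eval_word G w x y = eval_word G w x' y'"
  using assms(1)
proof (induction w)
  case (Cons l w)
  then show ?case
    using assms(2,3) by (auto simp: eval_letter_def split: sum.splits)
qed simp

lemma (in group) eval_letter_in_subgroup:
  assumes "subgroup S G" and "case fst l of Inl i \<Rightarrow> i < n | Inr j \<Rightarrow> j < m"
    and "\<forall>i<n. x i \<in> S" and "\<forall>j<m. y j \<in> S"
  shows "eval_letter G x y l \<in> S"
  using assms subgroup.m_inv_closed [OF assms(1)]
  by (auto simp: eval_letter_def Let_def split: sum.splits)

lemma (in group) eval_word_in_subgroup:
  assumes "subgroup S G" and "word_vars_ok n m w"
    and "\<forall>i<n. x i \<in> S" and "\<forall>j<m. y j \<in> S"
  shows "eval_word G w x y \<in> S"
  using assms(2)
proof (induction w)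
  case Nil
  then show ?case using subgroup.one_closed [OF assms(1)] by simp
next
  case (Cons l w)
  then have "eval_letter G x y l \<in> S"
    using eval_letter_in_subgroup [OF assms(1) _ assms(3,4)] by simp
  with Cons show ?case
    using subgroup.m_closed [OF assms(1)] by simp
qed

lemma (in group) eval_letter_mult_central:
  assumes "case fst l of Inl i \<Rightarrow> i < n | Inr j \<Rightarrow> j < m"
    and "\<forall>i<n. z i \<in> group_center G" and "\<forall>j<m. u j \<in> group_center G"
    and "\<forall>i<n. x i \<in> carrier G" and "\<forall>j<m. y j \<in> carrier G"
  shows "eval_letter G (\<lambda>i. z i \<otimes> x i) (\<lambda>j. u j \<otimes> y j) l
           = eval_letter G z u l \<otimes> eval_letter G x y l"
  using assms by (auto simp: eval_letter_def Let_def inv_mult_central split: sum.splits)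

lemma (in group) eval_word_mult_central:
  assumes "word_vars_ok n m w"
    and z: "\<forall>i<n. z i \<in> group_center G" and u: "\<forall>j<m. u j \<in> group_center G"
    and x: "\<forall>i<n. x i \<in> carrier G" and y: "\<forall>j<m. y j \<in> carrier G"
  shows "eval_word G w (\<lambda>i. z i \<otimes> x i) (\<lambda>j. u j \<otimes> y j)
           = eval_word G w z u \<otimes> eval_word G w x y"
  using assms(1)
proof (induction w)
  case (Cons l w)
  define A where "A = eval_letter G z u l"
  define B where "B = eval_letter G x y l"
  define C where "C = eval_word G w z u"
  define D where "D = eval_word G w x y"
  have C_center: "C \<in> group_center G"
    unfolding C_def using Cons.prems z u
    by (intro eval_word_in_subgroup [OF subgroup_group_center]) auto
  have carr: "A \<in> carrier G" "B \<in> carrier G" "C \<in> carrier G" "D \<in> carrier G"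
    unfolding A_def B_def C_def D_def using Cons.prems z u x y
    by (auto intro!: eval_letter_in_subgroup [OF subgroup_self] eval_word_in_subgroup [OF subgroup_self]
             simp: group_center_def)
  have "eval_word G (l # w) (\<lambda>i. z i \<otimes> x i) (\<lambda>j. u j \<otimes> y j) = A \<otimes> B \<otimes> (C \<otimes> D)"
    using Cons eval_letter_mult_central [OF _ z u x y]
    by (simp add: A_def B_def C_def D_def)
  also have "\<dots> = A \<otimes> (C \<otimes> B) \<otimes> D"
    using carr by (simp add: m_assoc group_centerD [OF C_center])
  also have "\<dots> = A \<otimes> C \<otimes> (B \<otimes> D)"
    using carr by (simp add: m_assoc)
  finally show ?case by (simp add: A_def B_def C_def D_def)
qed simp

lemma (in group) eval_word_mult_central_left:
  assumes "word_vars_ok n m w" and z: "\<forall>i<n. z i \<in> group_center G"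
    and x: "\<forall>i<n. x i \<in> carrier G" and y: "\<forall>j<m. y j \<in> carrier G"
  shows "eval_word G w (\<lambda>i. z i \<otimes> x i) y
           = eval_word G w z (\<lambda>j\<in>{..<m}. \<one>) \<otimes> eval_word G w x y"
proof -
  have "eval_word G w (\<lambda>i. z i \<otimes> x i) y
      = eval_word G w (\<lambda>i. z i \<otimes> x i) (\<lambda>j. (\<lambda>j\<in>{..<m}. \<one>) j \<otimes> y j)"
    by (rule eval_word_cong [OF assms(1)]) (simp_all add: y)
  also have "\<dots> = eval_word G w z (\<lambda>j\<in>{..<m}. \<one>) \<otimes> eval_word G w x y"
    by (rule eval_word_mult_central [OF assms(1) z _ x y])
       (simp add: subgroup.one_closed [OF subgroup_group_center])
  finally show ?thesis .
qed

lemma (in group) two_large_translate: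
  assumes "subgroup H G" and "two_large G H X" and "X \<subseteq> H" and "a \<in> H"
  obtains x where "x \<in> X" and "a \<otimes> x \<in> X"
proof -
  from assms(2,4) subgroup.one_closed [OF assms(1)] obtain x x' where
    "x \<in> X" "x' \<in> X" "a \<otimes> x = \<one> \<otimes> x'"
    unfolding two_large_def by blast
  moreover have "x' \<in> carrier G"
    using \<open>x' \<in> X\<close> assms(3) subgroup.mem_carrier [OF assms(1)] by blast
  ultimately show ?thesis
    using that by simp
qed

theorem theorem3p9:
  fixes G1 :: "('g, 'z) monoid_scheme" and n m :: nat and H :: "(nat \<Rightarrow> 'g) set"
    and w :: word and g :: "nat \<Rightarrow> 'g" and c :: 'g
  assumes "group G1"
    and "subgroup H (product_group {..<n} (\<lambda>_. G1))"
    and "word_vars_ok n m w"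
    and "g \<in> carrier (product_group {..<m} (\<lambda>_. G1))"
    and "c \<in> carrier G1"
    and "two_large (product_group {..<n} (\<lambda>_. G1)) H {h \<in> H. eval_word G1 w h g = c}"
  shows "\<forall>h\<in>H. (\<forall>i<n. h i \<in> group_center G1) \<longrightarrow>
           eval_word G1 w h (\<lambda>j\<in>{..<m}. \<one>\<^bsub>G1\<^esub>) = \<one>\<^bsub>G1\<^esub>"
proof (intro ballI impI)
  interpret group G1 by fact
  let ?P = "product_group {..<n} (\<lambda>_. G1)" and ?one = "\<lambda>j\<in>{..<m}. \<one>\<^bsub>G1\<^esub>"
  fix h assume "h \<in> H" and h: "\<forall>i<n. h i \<in> group_center G1"
  have "group ?P"
    using assms(1) by simp
  then obtain x where "x \<in> H" "eval_word G1 w x g = c" "eval_word G1 w (h \<otimes>\<^bsub>?P\<^esub> x) g = c"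
    using group.two_large_translate [OF _ assms(2,6)] \<open>h \<in> H\<close> by blast
  have x: "\<forall>i<n. x i \<in> carrier G1" and g: "\<forall>j<m. g j \<in> carrier G1"
    using subgroup.mem_carrier [OF assms(2) \<open>x \<in> H\<close>] assms(4) by auto
  have "c = eval_word G1 w (\<lambda>i. h i \<otimes>\<^bsub>G1\<^esub> x i) g"
    using eval_word_cong [OF assms(3), where G = G1 and x = "h \<otimes>\<^bsub>?P\<^esub> x"
        and x' = "\<lambda>i. h i \<otimes>\<^bsub>G1\<^esub> x i" and y = g and y' = g]
      \<open>eval_word G1 w (h \<otimes>\<^bsub>?P\<^esub> x) g = c\<close> by simp
  also have "\<dots> = eval_word G1 w h ?one \<otimes>\<^bsub>G1\<^esub> c"
    using eval_word_mult_central_left [OF assms(3) h x g] \<open>eval_word G1 w x g = c\<close> by simp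
  finally show "eval_word G1 w h ?one = \<one>\<^bsub>G1\<^esub>"
    using eval_word_in_subgroup [OF subgroup_group_center assms(3) h] assms(5)
    by (simp add: group_center_def)
qed

end
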